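(* Restriction along the inclusion $\mathcal{S}_q\hookrightarrow\mathrm{Sp}(\mathcal{E}_q^{deg})$ induces an equivalence of categories $\mathcal{F}_{iso}\simeq\mathrm{Func}(\mathcal{S}_q,\mathcal{E})$.
   Context: $\mathcal{E}$ is the category of all $\mathbb{F}_2$-vector spaces. $\mathcal{E}_q^{deg}$: objects finite-dimensional quadratic spaces over $\mathbb{F}_2$ (possibly degenerate), morphisms injective linear maps preserving the forms; it has pullbacks. $\mathrm{Sp}(\mathcal{E}_q^{deg})$: same objects; morphisms are spans $[V\leftarrow D\rightarrow W]$ up to isomorphism of $D$, composed by pullback. $\mathcal{F}_{iso}=\mathrm{Func}(\mathrm{Sp}(\mathcal{E}_q^{deg}),\mathcal{E})$. $\mathcal{S}_q$ is the full subcategory of $\mathrm{Sp}(\mathcal{E}_q^{deg})$ whose objects are the non-degenerate quadratic spaces (those whose polar bilinear form $q(x+y)+q(x)+q(y)$ has trivial radical). *)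

theory Defs
  imports "HOL-Algebra.Module" "HOL-Library.Z2"
begin

definition F2 :: "bit ring" where
  "F2 = \<lparr>carrier = UNIV, monoid.mult = (*), one = 1, zero = 0, add = (+)\<rparr>"

text \<open>An object of E is an F2-module (= F2-vector space) whose carrier lies in a fixed type 'v.\<close>

definition f2_linear :: "(bit, 'v) module \<Rightarrow> (bit, 'v) module \<Rightarrow> ('v \<Rightarrow> 'v) \<Rightarrow> bool" where
  "f2_linear M N f \<longleftrightarrow>
     f \<in> carrier M \<rightarrow> carrier N \<and>
     (\<forall>x\<in>carrier M. \<forall>y\<in>carrier M. f (x \<oplus>\<^bsub>M\<^esub> y) = f x \<oplus>\<^bsub>N\<^esub> f y) \<and>
     (\<forall>a. \<forall>x\<in>carrier M. f (a \<odot>\<^bsub>M\<^esub> x) = a \<odot>\<^bsub>N\<^esub> f x)"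

type_synonym vec = "nat \<Rightarrow> bit"

definition vecs :: "nat \<Rightarrow> vec set" where
  "vecs n = {x. \<forall>i\<ge>n. x i = 0}"

definition vadd :: "vec \<Rightarrow> vec \<Rightarrow> vec" where
  "vadd x y = (\<lambda>i. x i + y i)"

definition vzero :: vec where
  "vzero = (\<lambda>_. 0)"

text \<open>A quadratic space is a pair (n, q): the space F2^n (vectors supported in {0..<n})
  together with a function q on it.\<close>

type_synonym qspace = "nat \<times> (vec \<Rightarrow> bit)"

definition car :: "qspace \<Rightarrow> vec set" where
  "car V = vecs (fst V)"

definition form :: "qspace \<Rightarrow> vec \<Rightarrow> bit" where
  "form V = snd V"

definition polar :: "(vec \<Rightarrow> bit) \<Rightarrow> vec \<Rightarrow> vec \<Rightarrow> bit" where
  "polar q x y = q (vadd x y) + q x + q y"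

text \<open>q is a quadratic form over F2: q(0) = 0 (i.e. q(a x) = a^2 q(x) for a in F2) and the
  polar form is bilinear (it is symmetric by construction).\<close>

definition quadratic_space :: "qspace \<Rightarrow> bool" where
  "quadratic_space V \<longleftrightarrow>
     form V vzero = 0 \<and>
     (\<forall>x\<in>car V. \<forall>y\<in>car V. \<forall>z\<in>car V.
        polar (form V) (vadd x y) z = polar (form V) x z + polar (form V) y z)"

definition nondegenerate :: "qspace \<Rightarrow> bool" where
  "nondegenerate V \<longleftrightarrow>
     (\<forall>x\<in>car V. (\<forall>y\<in>car V. polar (form V) x y = 0) \<longrightarrow> x = vzero)"

text \<open>Objects of S_q.\<close>

definition nondeg_space :: "qspace \<Rightarrow> bool" where
  "nondeg_space V \<longleftrightarrow> quadratic_space V \<and> nondegenerate V"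

text \<open>Morphisms of E_q^deg: injective linear maps preserving the forms
  (two such maps are equal iff they agree on car V).\<close>

definition qmor :: "qspace \<Rightarrow> qspace \<Rightarrow> (vec \<Rightarrow> vec) \<Rightarrow> bool" where
  "qmor V W f \<longleftrightarrow>
     (\<forall>x\<in>car V. f x \<in> car W) \<and>
     (\<forall>x\<in>car V. \<forall>y\<in>car V. f (vadd x y) = vadd (f x) (f y)) \<and>
     inj_on f (car V) \<and>
     (\<forall>x\<in>car V. form W (f x) = form V x)"

definition is_pullback ::
  "qspace \<Rightarrow> qspace \<Rightarrow> qspace \<Rightarrow> (vec \<Rightarrow> vec) \<Rightarrow> (vec \<Rightarrow> vec) \<Rightarrow>
   qspace \<Rightarrow> (vec \<Rightarrow> vec) \<Rightarrow> (vec \<Rightarrow> vec) \<Rightarrow> bool" where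
  "is_pullback A B W f g P p p' \<longleftrightarrow>
     quadratic_space P \<and> qmor P A p \<and> qmor P B p' \<and>
     (\<forall>x\<in>car P. f (p x) = g (p' x)) \<and>
     (\<forall>T a b. quadratic_space T \<and> qmor T A a \<and> qmor T B b \<and> (\<forall>x\<in>car T. f (a x) = g (b x)) \<longrightarrow>
        (\<exists>h. qmor T P h \<and> (\<forall>x\<in>car T. p (h x) = a x \<and> p' (h x) = b x) \<and>
             (\<forall>h'. qmor T P h' \<and> (\<forall>x\<in>car T. p (h' x) = a x \<and> p' (h' x) = b x) \<longrightarrow>
                   (\<forall>x\<in>car T. h' x = h x))))"

type_synonym span = "qspace \<times> (vec \<Rightarrow> vec) \<times> (vec \<Rightarrow> vec)"

text \<open>A span [V <- D -> W].\<close>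

definition is_span :: "qspace \<Rightarrow> qspace \<Rightarrow> span \<Rightarrow> bool" where
  "is_span V W s \<longleftrightarrow> (case s of (D, a, b) \<Rightarrow> quadratic_space D \<and> qmor D V a \<and> qmor D W b)"

definition span_iso :: "span \<Rightarrow> span \<Rightarrow> bool" where
  "span_iso s s' \<longleftrightarrow> (case s of (D, a, b) \<Rightarrow> case s' of (D', a', b') \<Rightarrow>
     (\<exists>h. qmor D D' h \<and> bij_betw h (car D) (car D') \<and>
          (\<forall>x\<in>car D. a' (h x) = a x \<and> b' (h x) = b x)))"

text \<open>Obj selects the objects of the full subcategory: quadratic_space for Sp(E_q^deg)
  itself, nondeg_space for S_q.\<close>

definition is_functor ::
  "(qspace \<Rightarrow> bool) \<Rightarrow> (qspace \<Rightarrow> (bit, 'v) module) \<Rightarrow> (qspace \<Rightarrow> qspace \<Rightarrow> span \<Rightarrow> 'v \<Rightarrow> 'v) \<Rightarrow> bool" where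
  "is_functor Obj F Fm \<longleftrightarrow>
     (\<forall>V. Obj V \<longrightarrow> module F2 (F V)) \<and>
     (\<forall>V W s. Obj V \<and> Obj W \<and> is_span V W s \<longrightarrow> f2_linear (F V) (F W) (Fm V W s)) \<and>
     (\<forall>V W s s'. Obj V \<and> Obj W \<and> is_span V W s \<and> is_span V W s' \<and> span_iso s s' \<longrightarrow>
        (\<forall>x\<in>carrier (F V). Fm V W s x = Fm V W s' x)) \<and>
     (\<forall>V. Obj V \<longrightarrow> (\<forall>x\<in>carrier (F V). Fm V V (V, id, id) x = x)) \<and>
     (\<forall>U V W D a b D' c d P p p'.
        Obj U \<and> Obj V \<and> Obj W \<and> is_span U V (D, a, b) \<and> is_span V W (D', c, d) \<and>
        is_pullback D D' V b c P p p' \<longrightarrow>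
        (\<forall>x\<in>carrier (F U). Fm U W (P, a \<circ> p, d \<circ> p') x = Fm V W (D', c, d) (Fm U V (D, a, b) x)))"

definition is_nat ::
  "(qspace \<Rightarrow> bool) \<Rightarrow> (qspace \<Rightarrow> (bit, 'v) module) \<Rightarrow> (qspace \<Rightarrow> qspace \<Rightarrow> span \<Rightarrow> 'v \<Rightarrow> 'v) \<Rightarrow>
   (qspace \<Rightarrow> (bit, 'v) module) \<Rightarrow> (qspace \<Rightarrow> qspace \<Rightarrow> span \<Rightarrow> 'v \<Rightarrow> 'v) \<Rightarrow>
   (qspace \<Rightarrow> 'v \<Rightarrow> 'v) \<Rightarrow> bool" where
  "is_nat Obj F Fm G Gm \<eta> \<longleftrightarrow>
     (\<forall>V. Obj V \<longrightarrow> f2_linear (F V) (G V) (\<eta> V)) \<and>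
     (\<forall>V W s. Obj V \<and> Obj W \<and> is_span V W s \<longrightarrow>
        (\<forall>x\<in>carrier (F V). \<eta> W (Fm V W s x) = Gm V W s (\<eta> V x)))"

definition is_nat_iso ::
  "(qspace \<Rightarrow> bool) \<Rightarrow> (qspace \<Rightarrow> (bit, 'v) module) \<Rightarrow> (qspace \<Rightarrow> qspace \<Rightarrow> span \<Rightarrow> 'v \<Rightarrow> 'v) \<Rightarrow>
   (qspace \<Rightarrow> (bit, 'v) module) \<Rightarrow> (qspace \<Rightarrow> qspace \<Rightarrow> span \<Rightarrow> 'v \<Rightarrow> 'v) \<Rightarrow>
   (qspace \<Rightarrow> 'v \<Rightarrow> 'v) \<Rightarrow> bool" where
  "is_nat_iso Obj F Fm G Gm \<eta> \<longleftrightarrow>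
     is_nat Obj F Fm G Gm \<eta> \<and>
     (\<forall>V. Obj V \<longrightarrow> bij_betw (\<eta> V) (carrier (F V)) (carrier (G V)))"

end

theory Submission
  imports Defs
begin

text \<open>Every quadratic space V embeds isometrically into a non-degenerate one, env V: V itself
  if V is non-degenerate, otherwise the hyperbolic extension V \<oplus> F2^n with the form
  q(x, y) = q(x) + <x, y>. The two spans V <- V -> env V and env V <- V -> V compose to the
  identity of V, since the pullback of the injection V -> env V along itself is V. So every object
  of Sp(E_q^deg) is a retract of an object of S_q, which makes restriction faithful and full; a
  functor G on S_q extends to V by taking the image of the idempotent G(env V <- V -> env V).\<close>

section \<open>The hyperbolic extension\<close>

(* HOL-Library.Z2 rewrites + and * on bit to XOR and AND by default, which blocks algebra_simps. *)
declare add_bit_eq_xor [simp del] mult_bit_eq_and [simp del]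

lemma vadd_vzero [simp]: "vadd x vzero = x" "vadd vzero x = x"
  by (simp_all add: vadd_def vzero_def)

lemma polar_vzero [simp]:
  assumes "q vzero = 0"
  shows "polar q x vzero = 0" "polar q vzero x = 0"
  using assms by (simp_all add: polar_def algebra_simps)

definition trunc :: "nat \<Rightarrow> vec \<Rightarrow> vec" where
  "trunc n x = (\<lambda>i. if i < n then x i else 0)"

lemma trunc_in_vecs: "trunc n x \<in> vecs n"
  by (simp add: trunc_def vecs_def)

lemma trunc_vadd: "trunc n (vadd x y) = vadd (trunc n x) (trunc n y)"
  by (auto simp: trunc_def vadd_def)

lemma trunc_vzero [simp]: "trunc n vzero = vzero"
  by (auto simp: trunc_def vzero_def)

lemma trunc_eq_self: "x \<in> vecs n \<Longrightarrow> trunc n x = x"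
  by (auto simp: trunc_def vecs_def)

definition hyp_ext_form :: "qspace \<Rightarrow> vec \<Rightarrow> bit" where
  "hyp_ext_form V x = form V (trunc (fst V) x) + (\<Sum>i<fst V. x i * x (fst V + i))"

definition hyp_ext :: "qspace \<Rightarrow> qspace" where
  "hyp_ext V = (2 * fst V, hyp_ext_form V)"

lemma car_hyp_ext: "car (hyp_ext V) = vecs (2 * fst V)"
  by (simp add: car_def hyp_ext_def)

lemma form_hyp_ext: "form (hyp_ext V) = hyp_ext_form V"
  by (simp add: form_def hyp_ext_def)

lemma polar_hyp_ext_form:
  "polar (hyp_ext_form V) x y = polar (form V) (trunc (fst V) x) (trunc (fst V) y)
     + (\<Sum>i<fst V. x i * y (fst V + i) + y i * x (fst V + i))"
  unfolding polar_def hyp_ext_form_def trunc_vadd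
  by (simp add: vadd_def sum.distrib algebra_simps)

lemma quadratic_space_hyp_ext:
  assumes "quadratic_space V"
  shows "quadratic_space (hyp_ext V)"
proof -
  let ?n = "fst V"
  have "hyp_ext_form V vzero = 0"
    using assms by (simp add: hyp_ext_form_def quadratic_space_def, simp add: vzero_def)
  moreover have "polar (hyp_ext_form V) (vadd x y) z = polar (hyp_ext_form V) x z + polar (hyp_ext_form V) y z"
    for x y z
  proof -
    have "polar (form V) (vadd (trunc ?n x) (trunc ?n y)) (trunc ?n z) =
        polar (form V) (trunc ?n x) (trunc ?n z) + polar (form V) (trunc ?n y) (trunc ?n z)"
      using assms trunc_in_vecs by (simp add: quadratic_space_def car_def)
    then show ?thesis
      unfolding polar_hyp_ext_form trunc_vadd
      by (simp add: vadd_def sum.distrib algebra_simps)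
  qed
  ultimately show ?thesis
    by (simp add: quadratic_space_def form_hyp_ext)
qed

lemma nondegenerate_hyp_ext:
  assumes "form V vzero = 0"
  shows "nondegenerate (hyp_ext V)"
  unfolding nondegenerate_def
proof (intro ballI impI)
  let ?n = "fst V"
  fix x assume x: "x \<in> car (hyp_ext V)"
    and orth: "\<forall>y\<in>car (hyp_ext V). polar (form (hyp_ext V)) x y = 0"
  define e where "e k = (\<lambda>j. if j = k then 1 else 0 :: bit)" for k :: nat
  have orth_e: "polar (hyp_ext_form V) x (e k) = 0" if "k < 2 * ?n" for k
    using orth that by (auto simp: form_hyp_ext car_hyp_ext vecs_def e_def)
  \<comment> \<open>Pairing with e (n + i) reads off x i; once the first half of x vanishes, pairing with
    e i reads off x (n + i).\<close>
  have low: "x i = 0" if "i < ?n" for i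
  proof -
    have "(\<Sum>j<?n. x j * e (?n + i) (?n + j) + e (?n + i) j * x (?n + j)) = (\<Sum>j<?n. if j = i then x i else 0)"
      by (rule sum.cong) (auto simp: e_def)
    moreover have "trunc ?n (e (?n + i)) = vzero"
      by (auto simp: trunc_def e_def vzero_def)
    ultimately show ?thesis
      using orth_e[of "?n + i"] that assms
      by (simp add: polar_hyp_ext_form)
  qed
  then have trunc_x: "trunc ?n x = vzero"
    by (auto simp: trunc_def vzero_def)
  have high: "x (?n + i) = 0" if "i < ?n" for i
  proof -
    have "(\<Sum>j<?n. x j * e i (?n + j) + e i j * x (?n + j)) = (\<Sum>j<?n. if j = i then x (?n + i) else 0)"
      by (rule sum.cong) (auto simp: e_def low)
    then show ?thesis
      using orth_e[of i] that assms
      by (simp add: polar_hyp_ext_form trunc_x)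
  qed
  show "x = vzero"
  proof
    fix k
    consider "k < ?n" | "?n \<le> k" "k < 2 * ?n" | "2 * ?n \<le> k"
      by linarith
    then show "x k = vzero k"
    proof cases
      case 2
      then show ?thesis
        using high[of "k - ?n"] by (simp add: vzero_def)
    qed (use low x in \<open>auto simp: car_hyp_ext vecs_def vzero_def\<close>)
  qed
qed

lemma qmor_hyp_ext: "qmor V (hyp_ext V) id"
proof -
  have "hyp_ext_form V x = form V x" if "x \<in> car V" for x
    using that by (simp add: hyp_ext_form_def trunc_eq_self car_def vecs_def)
  then show ?thesis
    unfolding qmor_def car_hyp_ext form_hyp_ext by (auto simp: car_def vecs_def)
qed

lemma qmor_id: "qmor V V id"
  by (simp add: qmor_def)

lemma is_span_id: "quadratic_space V \<Longrightarrow> is_span V V (V, id, id)"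
  by (simp add: is_span_def qmor_id)

lemma qmor_comp: "qmor U V f \<Longrightarrow> qmor V W g \<Longrightarrow> qmor U W (g \<circ> f)"
  by (auto simp: qmor_def inj_on_def)

lemma is_pullback_id_right:
  assumes "quadratic_space D" "qmor D E b"
  shows "is_pullback D E Z b id D id b"
  using assms by (auto simp: is_pullback_def qmor_id)

lemma is_pullback_id_left:
  assumes "quadratic_space D" "qmor D E a"
  shows "is_pullback E D Z id a D a id"
  using assms by (auto simp: is_pullback_def qmor_id)

lemma f2_linear_id: "f2_linear M M id"
  by (simp add: f2_linear_def)

lemma f2_linear_comp: "f2_linear L M f \<Longrightarrow> f2_linear M N g \<Longrightarrow> f2_linear L N (g \<circ> f)"
  unfolding f2_linear_def by (auto simp: Pi_def)

lemma f2_linear_closed: "f2_linear M N f \<Longrightarrow> x \<in> carrier M \<Longrightarrow> f x \<in> carrier N"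
  unfolding f2_linear_def by blast

lemma module_fixed_points:
  assumes M: "module F2 M" and e: "f2_linear M M e"
  shows "module F2 (M\<lparr>carrier := {x \<in> carrier M. e x = x}\<rparr>)"
proof -
  interpret module F2 M by (rule M)
  have closed: "e x \<in> carrier M" and smult: "e (c \<odot>\<^bsub>M\<^esub> x) = c \<odot>\<^bsub>M\<^esub> e x"
    if "x \<in> carrier M" for x c
    using e that by (auto simp: f2_linear_def)
  have "submodule {x \<in> carrier M. e x = x} F2 M"
  proof (rule submoduleI)
    have "e \<zero>\<^bsub>M\<^esub> = \<zero>\<^bsub>F2\<^esub> \<odot>\<^bsub>M\<^esub> e \<zero>\<^bsub>M\<^esub>"
      using smult[of "\<zero>\<^bsub>M\<^esub>" "\<zero>\<^bsub>F2\<^esub>"] by simp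
    then show "\<zero>\<^bsub>M\<^esub> \<in> {x \<in> carrier M. e x = x}"
      using closed[of "\<zero>\<^bsub>M\<^esub>"] by simp
  next
    fix a assume "a \<in> {x \<in> carrier M. e x = x}"
    moreover have "\<ominus>\<^bsub>M\<^esub> a = (\<ominus>\<^bsub>F2\<^esub> \<one>\<^bsub>F2\<^esub>) \<odot>\<^bsub>M\<^esub> a" if "a \<in> carrier M"
      using smult_l_minus[of "\<one>\<^bsub>F2\<^esub>" a] that by simp
    ultimately show "\<ominus>\<^bsub>M\<^esub> a \<in> {x \<in> carrier M. e x = x}"
      using smult by auto
  qed (use e in \<open>auto simp: f2_linear_def\<close>)
  then show ?thesis
    using submodule.submodule_is_module M by blast
qed

lemma functor_module: "is_functor Obj F Fm \<Longrightarrow> Obj V \<Longrightarrow> module F2 (F V)"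
  unfolding is_functor_def by (elim conjE) blast

lemma functor_f2_linear:
  "is_functor Obj F Fm \<Longrightarrow> Obj V \<Longrightarrow> Obj W \<Longrightarrow> is_span V W s \<Longrightarrow> f2_linear (F V) (F W) (Fm V W s)"
  unfolding is_functor_def by (elim conjE) blast

lemma functor_closed:
  "is_functor Obj F Fm \<Longrightarrow> Obj V \<Longrightarrow> Obj W \<Longrightarrow> is_span V W s \<Longrightarrow> x \<in> carrier (F V) \<Longrightarrow>
   Fm V W s x \<in> carrier (F W)"
  using functor_f2_linear f2_linear_closed by metis

lemma functor_span_iso:
  "is_functor Obj F Fm \<Longrightarrow> Obj V \<Longrightarrow> Obj W \<Longrightarrow> is_span V W s \<Longrightarrow> is_span V W s' \<Longrightarrow>
   span_iso s s' \<Longrightarrow> x \<in> carrier (F V) \<Longrightarrow> Fm V W s x = Fm V W s' x"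
  unfolding is_functor_def by (elim conjE) blast

lemma functor_id: "is_functor Obj F Fm \<Longrightarrow> Obj V \<Longrightarrow> x \<in> carrier (F V) \<Longrightarrow> Fm V V (V, id, id) x = x"
  unfolding is_functor_def by (elim conjE) blast

lemma functor_comp:
  assumes "is_functor Obj F Fm" "Obj U" "Obj V" "Obj W" "is_span U V (D, a, b)" "is_span V W (D', c, d)"
    "is_pullback D D' V b c P p p'" "x \<in> carrier (F U)"
  shows "Fm U W (P, a \<circ> p, d \<circ> p') x = Fm V W (D', c, d) (Fm U V (D, a, b) x)"
  using assms unfolding is_functor_def by blast

lemma functor_comp_incl_right:
  assumes "is_functor Obj F Fm" "Obj U" "Obj V" "Obj W" "is_span U V (D, a, b)" "is_span V W (E, id, id)"
    "qmor D E b" "x \<in> carrier (F U)"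
  shows "Fm U W (D, a, b) x = Fm V W (E, id, id) (Fm U V (D, a, b) x)"
proof -
  have "quadratic_space D"
    using assms(5) by (simp add: is_span_def)
  from functor_comp[OF assms(1-6) is_pullback_id_right[OF this assms(7)] assms(8)]
  show ?thesis by simp
qed

lemma functor_comp_incl_left:
  assumes "is_functor Obj F Fm" "Obj U" "Obj V" "Obj W" "is_span U V (E, id, id)" "is_span V W (D, a, b)"
    "qmor D E a" "x \<in> carrier (F U)"
  shows "Fm U W (D, a, b) x = Fm V W (D, a, b) (Fm U V (E, id, id) x)"
proof -
  have "quadratic_space D"
    using assms(6) by (simp add: is_span_def)
  from functor_comp[OF assms(1-6) is_pullback_id_left[OF this assms(7)] assms(8)]
  show ?thesis by simp
qed

lemma nat_f2_linear: "is_nat Obj F Fm G Gm \<eta> \<Longrightarrow> Obj V \<Longrightarrow> f2_linear (F V) (G V) (\<eta> V)"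
  unfolding is_nat_def by blast

lemma nat_commute:
  "is_nat Obj F Fm G Gm \<eta> \<Longrightarrow> Obj V \<Longrightarrow> Obj W \<Longrightarrow> is_span V W s \<Longrightarrow> x \<in> carrier (F V) \<Longrightarrow>
   \<eta> W (Fm V W s x) = Gm V W s (\<eta> V x)"
  unfolding is_nat_def by blast

section \<open>Restriction to a full subcategory of envelopes\<close>

locale retract_envelope =
  fixes Sub :: "qspace \<Rightarrow> bool" and env :: "qspace \<Rightarrow> qspace"
  assumes quadratic_space_if_Sub: "Sub V \<Longrightarrow> quadratic_space V"
    and Sub_env: "quadratic_space V \<Longrightarrow> Sub (env V)"
    and qmor_id_env: "qmor V (env V) id"
    and env_eq_self: "Sub V \<Longrightarrow> env V = V"
begin

lemma quadratic_space_env: "quadratic_space V \<Longrightarrow> quadratic_space (env V)"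
  by (simp add: Sub_env quadratic_space_if_Sub)

lemma qmor_into_env: "qmor D V a \<Longrightarrow> qmor D (env V) a"
  using qmor_comp[OF _ qmor_id_env] by (metis id_comp)

lemma is_span_env: "is_span U V (D, a, b) \<Longrightarrow> is_span (env U) (env V) (D, a, b)"
  by (simp add: is_span_def qmor_into_env)

lemma is_span_into_env: "quadratic_space V \<Longrightarrow> is_span V (env V) (V, id, id)"
  by (simp add: is_span_def qmor_id qmor_id_env)

lemma is_span_from_env: "quadratic_space V \<Longrightarrow> is_span (env V) V (V, id, id)"
  by (simp add: is_span_def qmor_id qmor_id_env)

lemma is_span_env_id: "quadratic_space V \<Longrightarrow> is_span (env V) (env V) (V, id, id)"
  by (rule is_span_env[OF is_span_id])

lemma functor_retract:
  assumes F: "is_functor quadratic_space F Fm" and V: "quadratic_space V" and x: "x \<in> carrier (F V)"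
  shows "Fm (env V) V (V, id, id) (Fm V (env V) (V, id, id) x) = x"
  using functor_comp_incl_right[OF F V quadratic_space_env[OF V] V is_span_into_env[OF V]
      is_span_from_env[OF V] qmor_id x]
  by (simp add: functor_id[OF F V x])

lemma nat_eq_if_eq_on_Sub:
  assumes F: "is_functor quadratic_space F Fm"
    and \<eta>: "is_nat quadratic_space F Fm G Gm \<eta>" and \<eta>': "is_nat quadratic_space F Fm G Gm \<eta>'"
    and eq: "\<And>V x. Sub V \<Longrightarrow> x \<in> carrier (F V) \<Longrightarrow> \<eta> V x = \<eta>' V x"
    and V: "quadratic_space V" and x: "x \<in> carrier (F V)"
  shows "\<eta> V x = \<eta>' V x"
proof -
  let ?y = "Fm V (env V) (V, id, id) x"
  note EV = quadratic_space_env[OF V]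
  have y: "?y \<in> carrier (F (env V))"
    by (rule functor_closed[OF F V EV is_span_into_env[OF V] x])
  have "\<eta> V x = \<eta> V (Fm (env V) V (V, id, id) ?y)"
    by (simp add: functor_retract[OF F V x])
  also have "\<dots> = Gm (env V) V (V, id, id) (\<eta> (env V) ?y)"
    by (rule nat_commute[OF \<eta> EV V is_span_from_env[OF V] y])
  also have "\<dots> = Gm (env V) V (V, id, id) (\<eta>' (env V) ?y)"
    by (simp add: eq[OF Sub_env[OF V] y])
  also have "\<dots> = \<eta>' V (Fm (env V) V (V, id, id) ?y)"
    by (rule nat_commute[OF \<eta>' EV V is_span_from_env[OF V] y, symmetric])
  also have "\<dots> = \<eta>' V x"
    by (simp add: functor_retract[OF F V x])
  finally show ?thesis .
qed

definition ext_nat ::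
  "(qspace \<Rightarrow> qspace \<Rightarrow> span \<Rightarrow> 'v \<Rightarrow> 'v) \<Rightarrow> (qspace \<Rightarrow> qspace \<Rightarrow> span \<Rightarrow> 'v \<Rightarrow> 'v) \<Rightarrow>
   (qspace \<Rightarrow> 'v \<Rightarrow> 'v) \<Rightarrow> qspace \<Rightarrow> 'v \<Rightarrow> 'v" where
  "ext_nat Fm Gm \<theta> V = Gm (env V) V (V, id, id) \<circ> \<theta> (env V) \<circ> Fm V (env V) (V, id, id)"

lemma ext_nat_eq_on_Sub:
  assumes F: "is_functor quadratic_space F Fm" and G: "is_functor quadratic_space G Gm"
    and \<theta>: "is_nat Sub F Fm G Gm \<theta>" and V: "Sub V" and x: "x \<in> carrier (F V)"
  shows "ext_nat Fm Gm \<theta> V x = \<theta> V x"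
proof -
  have "\<theta> V x \<in> carrier (G V)"
    by (rule f2_linear_closed[OF nat_f2_linear[OF \<theta> V] x])
  then show ?thesis
    using quadratic_space_if_Sub[OF V]
    by (simp add: ext_nat_def env_eq_self[OF V] functor_id[OF F _ x] functor_id[OF G])
qed

lemma ext_nat_commute:
  assumes F: "is_functor quadratic_space F Fm" and G: "is_functor quadratic_space G Gm"
    and \<theta>: "is_nat Sub F Fm G Gm \<theta>"
    and V: "quadratic_space V" and W: "quadratic_space W" and s: "is_span V W (D, a, b)"
    and x: "x \<in> carrier (F V)"
  shows "ext_nat Fm Gm \<theta> W (Fm V W (D, a, b) x) = Gm V W (D, a, b) (ext_nat Fm Gm \<theta> V x)"
proof -
  have a: "qmor D V a" and b: "qmor D W b"
    using s by (auto simp: is_span_def)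
  note EV = quadratic_space_env[OF V] and EW = quadratic_space_env[OF W]
  let ?y = "Fm V (env V) (V, id, id) x"
  have y: "?y \<in> carrier (F (env V))"
    by (rule functor_closed[OF F V EV is_span_into_env[OF V] x])
  have z: "\<theta> (env V) ?y \<in> carrier (G (env V))"
    by (rule f2_linear_closed[OF nat_f2_linear[OF \<theta> Sub_env[OF V]] y])
  have "Fm W (env W) (W, id, id) (Fm V W (D, a, b) x) = Fm V (env W) (D, a, b) x"
    by (rule functor_comp_incl_right[OF F V W EW s is_span_into_env[OF W] b x, symmetric])
  also have "\<dots> = Fm (env V) (env W) (D, a, b) ?y"
    by (rule functor_comp_incl_left[OF F V EV EW is_span_into_env[OF V] is_span_env[OF s] a x])
  finally have "ext_nat Fm Gm \<theta> W (Fm V W (D, a, b) x) =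
      Gm (env W) W (W, id, id) (\<theta> (env W) (Fm (env V) (env W) (D, a, b) ?y))"
    by (simp add: ext_nat_def)
  also have "\<dots> = Gm (env W) W (W, id, id) (Gm (env V) (env W) (D, a, b) (\<theta> (env V) ?y))"
    by (simp add: nat_commute[OF \<theta> Sub_env[OF V] Sub_env[OF W] is_span_env[OF s] y])
  also have "\<dots> = Gm (env V) W (D, a, b) (\<theta> (env V) ?y)"
    by (rule functor_comp_incl_right[OF G EV EW W is_span_env[OF s] is_span_from_env[OF W] b z, symmetric])
  also have "\<dots> = Gm V W (D, a, b) (Gm (env V) V (V, id, id) (\<theta> (env V) ?y))"
    by (rule functor_comp_incl_left[OF G EV V W is_span_from_env[OF V] s a z])
  also have "\<dots> = Gm V W (D, a, b) (ext_nat Fm Gm \<theta> V x)"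
    by (simp add: ext_nat_def)
  finally show ?thesis .
qed

lemma is_nat_ext_nat:
  assumes F: "is_functor quadratic_space F Fm" and G: "is_functor quadratic_space G Gm"
    and \<theta>: "is_nat Sub F Fm G Gm \<theta>"
  shows "is_nat quadratic_space F Fm G Gm (ext_nat Fm Gm \<theta>)"
  unfolding is_nat_def
proof (intro conjI allI impI ballI)
  fix V assume V: "quadratic_space V"
  show "f2_linear (F V) (G V) (ext_nat Fm Gm \<theta> V)"
    unfolding ext_nat_def
    by (rule f2_linear_comp[OF functor_f2_linear[OF F V quadratic_space_env[OF V] is_span_into_env[OF V]]
          f2_linear_comp[OF nat_f2_linear[OF \<theta> Sub_env[OF V]]
            functor_f2_linear[OF G quadratic_space_env[OF V] V is_span_from_env[OF V]]]])
next
  fix V W s x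
  assume "quadratic_space V \<and> quadratic_space W \<and> is_span V W s" and "x \<in> carrier (F V)"
  then show "ext_nat Fm Gm \<theta> W (Fm V W s x) = Gm V W s (ext_nat Fm Gm \<theta> V x)"
    using ext_nat_commute[OF F G \<theta>] by (cases s) auto
qed

definition ext_obj :: "(qspace \<Rightarrow> (bit, 'v) module) \<Rightarrow> (qspace \<Rightarrow> qspace \<Rightarrow> span \<Rightarrow> 'v \<Rightarrow> 'v) \<Rightarrow>
    qspace \<Rightarrow> (bit, 'v) module" where
  "ext_obj G Gm V =
     (G (env V))\<lparr>carrier := {x \<in> carrier (G (env V)). Gm (env V) (env V) (V, id, id) x = x}\<rparr>"

definition ext_mor ::
  "(qspace \<Rightarrow> qspace \<Rightarrow> span \<Rightarrow> 'v \<Rightarrow> 'v) \<Rightarrow> qspace \<Rightarrow> qspace \<Rightarrow> span \<Rightarrow> 'v \<Rightarrow> 'v" where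
  "ext_mor Gm V W = Gm (env V) (env W)"

lemma carrier_ext_obj:
  "x \<in> carrier (ext_obj G Gm V) \<longleftrightarrow> x \<in> carrier (G (env V)) \<and> Gm (env V) (env V) (V, id, id) x = x"
  by (simp add: ext_obj_def)

lemma ext_obj_eq_on_Sub:
  assumes G: "is_functor Sub G Gm" and V: "Sub V"
  shows "ext_obj G Gm V = G V"
proof -
  have "{x \<in> carrier (G V). Gm V V (V, id, id) x = x} = carrier (G V)"
    using functor_id[OF G V] by blast
  then show ?thesis
    by (simp add: ext_obj_def env_eq_self[OF V])
qed

lemma ext_mor_fixed:
  assumes G: "is_functor Sub G Gm" and V: "quadratic_space V" and W: "quadratic_space W"
    and s: "is_span V W (D, a, b)" and x: "x \<in> carrier (G (env V))"
  shows "Gm (env W) (env W) (W, id, id) (Gm (env V) (env W) (D, a, b) x) = Gm (env V) (env W) (D, a, b) x"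
  using s functor_comp_incl_right[OF G Sub_env[OF V] Sub_env[OF W] Sub_env[OF W] is_span_env[OF s]
      is_span_env_id[OF W] _ x]
  by (simp add: is_span_def)

lemma f2_linear_ext_mor:
  assumes G: "is_functor Sub G Gm" and V: "quadratic_space V" and W: "quadratic_space W"
    and s: "is_span V W (D, a, b)"
  shows "f2_linear (ext_obj G Gm V) (ext_obj G Gm W) (ext_mor Gm V W (D, a, b))"
proof -
  have "f2_linear (G (env V)) (G (env W)) (Gm (env V) (env W) (D, a, b))"
    by (rule functor_f2_linear[OF G Sub_env[OF V] Sub_env[OF W] is_span_env[OF s]])
  then show ?thesis
    using ext_mor_fixed[OF G V W s]
    unfolding f2_linear_def by (auto simp: ext_obj_def ext_mor_def Pi_def)
qed

lemma is_functor_ext: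
  assumes G: "is_functor Sub G Gm"
  shows "is_functor quadratic_space (ext_obj G Gm) (ext_mor Gm)"
  unfolding is_functor_def
proof (intro conjI allI impI ballI)
  fix V assume V: "quadratic_space V"
  show "module F2 (ext_obj G Gm V)"
    unfolding ext_obj_def
    by (rule module_fixed_points[OF functor_module[OF G Sub_env[OF V]]
          functor_f2_linear[OF G Sub_env[OF V] Sub_env[OF V] is_span_env_id[OF V]]])
  fix x assume "x \<in> carrier (ext_obj G Gm V)"
  then show "ext_mor Gm V V (V, id, id) x = x"
    by (simp add: carrier_ext_obj ext_mor_def)
next
  fix V W s assume "quadratic_space V \<and> quadratic_space W \<and> is_span V W s"
  then show "f2_linear (ext_obj G Gm V) (ext_obj G Gm W) (ext_mor Gm V W s)"
    using f2_linear_ext_mor[OF G] by (cases s) auto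
next
  fix V W s s' x
  assume "quadratic_space V \<and> quadratic_space W \<and> is_span V W s \<and> is_span V W s' \<and> span_iso s s'"
    and "x \<in> carrier (ext_obj G Gm V)"
  then show "ext_mor Gm V W s x = ext_mor Gm V W s' x"
    using functor_span_iso[OF G Sub_env Sub_env is_span_env is_span_env]
    by (cases s, cases s') (auto simp: ext_mor_def carrier_ext_obj)
next
  fix U V W D a b D' c d P p p' x
  assume "quadratic_space U \<and> quadratic_space V \<and> quadratic_space W \<and> is_span U V (D, a, b) \<and>
      is_span V W (D', c, d) \<and> is_pullback D D' V b c P p p'"
    and "x \<in> carrier (ext_obj G Gm U)"
  moreover have "is_pullback D D' V b c P p p' = is_pullback D D' (env V) b c P p p'"
    by (simp add: is_pullback_def)
  ultimately show "ext_mor Gm U W (P, a \<circ> p, d \<circ> p') x = ext_mor Gm V W (D', c, d) (ext_mor Gm U V (D, a, b) x)"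
    using functor_comp[OF G Sub_env Sub_env Sub_env is_span_env is_span_env]
    by (auto simp: ext_mor_def carrier_ext_obj)
qed

lemma is_nat_iso_ext:
  assumes G: "is_functor Sub G Gm"
  shows "is_nat_iso Sub (ext_obj G Gm) (ext_mor Gm) G Gm (\<lambda>V. id)"
  using ext_obj_eq_on_Sub[OF G]
  by (simp add: is_nat_iso_def is_nat_def f2_linear_id ext_mor_def env_eq_self)

end

definition nondeg_env :: "qspace \<Rightarrow> qspace" where
  "nondeg_env V = (if nondeg_space V then V else hyp_ext V)"

interpretation nondeg: retract_envelope nondeg_space nondeg_env
proof
  fix V
  show "nondeg_space V \<Longrightarrow> quadratic_space V"
    by (simp add: nondeg_space_def)
  show "quadratic_space V \<Longrightarrow> nondeg_space (nondeg_env V)"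
    using quadratic_space_hyp_ext nondegenerate_hyp_ext
    by (auto simp: nondeg_env_def nondeg_space_def quadratic_space_def)
  show "qmor V (nondeg_env V) id"
    by (simp add: nondeg_env_def qmor_id qmor_hyp_ext)
  show "nondeg_space V \<Longrightarrow> nondeg_env V = V"
    by (simp add: nondeg_env_def)
qed

theorem theorem4p13:
  fixes dummy :: "'v itself"
  shows
  "(\<forall>(F :: qspace \<Rightarrow> (bit, 'v) module) Fm G Gm.
      is_functor quadratic_space F Fm \<and> is_functor quadratic_space G Gm \<longrightarrow>
      (\<forall>\<eta> \<eta>'. is_nat quadratic_space F Fm G Gm \<eta> \<and> is_nat quadratic_space F Fm G Gm \<eta>' \<and>
          (\<forall>V. nondeg_space V \<longrightarrow> (\<forall>x\<in>carrier (F V). \<eta> V x = \<eta>' V x)) \<longrightarrow>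
          (\<forall>V. quadratic_space V \<longrightarrow> (\<forall>x\<in>carrier (F V). \<eta> V x = \<eta>' V x))) \<and>
      (\<forall>\<theta>. is_nat nondeg_space F Fm G Gm \<theta> \<longrightarrow>
          (\<exists>\<eta>. is_nat quadratic_space F Fm G Gm \<eta> \<and>
               (\<forall>V. nondeg_space V \<longrightarrow> (\<forall>x\<in>carrier (F V). \<eta> V x = \<theta> V x))))) \<and>
   (\<forall>(G :: qspace \<Rightarrow> (bit, 'v) module) Gm. is_functor nondeg_space G Gm \<longrightarrow>
      (\<exists>F Fm \<theta>. is_functor quadratic_space F Fm \<and> is_nat_iso nondeg_space F Fm G Gm \<theta>))"
proof (intro conjI allI impI ballI)
  fix F G :: "qspace \<Rightarrow> (bit, 'v) module" and Fm Gm
  assume "is_functor quadratic_space F Fm \<and> is_functor quadratic_space G Gm"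
  then have F: "is_functor quadratic_space F Fm"
    by auto
  fix \<eta> \<eta>' V x
  assume "is_nat quadratic_space F Fm G Gm \<eta> \<and> is_nat quadratic_space F Fm G Gm \<eta>' \<and>
      (\<forall>V. nondeg_space V \<longrightarrow> (\<forall>x\<in>carrier (F V). \<eta> V x = \<eta>' V x))"
    and V: "quadratic_space V" and x: "x \<in> carrier (F V)"
  then show "\<eta> V x = \<eta>' V x"
    using nondeg.nat_eq_if_eq_on_Sub[OF F _ _ _ V x] by auto
next
  fix F G :: "qspace \<Rightarrow> (bit, 'v) module" and Fm Gm \<theta>
  assume "is_functor quadratic_space F Fm \<and> is_functor quadratic_space G Gm"
    and \<theta>: "is_nat nondeg_space F Fm G Gm \<theta>"
  then have F: "is_functor quadratic_space F Fm" and G: "is_functor quadratic_space G Gm"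
    by auto
  show "\<exists>\<eta>. is_nat quadratic_space F Fm G Gm \<eta> \<and>
      (\<forall>V. nondeg_space V \<longrightarrow> (\<forall>x\<in>carrier (F V). \<eta> V x = \<theta> V x))"
    using nondeg.is_nat_ext_nat[OF F G \<theta>] nondeg.ext_nat_eq_on_Sub[OF F G \<theta>] by auto
next
  fix G :: "qspace \<Rightarrow> (bit, 'v) module" and Gm
  assume G: "is_functor nondeg_space G Gm"
  show "\<exists>F Fm \<theta>. is_functor quadratic_space F Fm \<and> is_nat_iso nondeg_space F Fm G Gm \<theta>"
    using nondeg.is_functor_ext[OF G] nondeg.is_nat_iso_ext[OF G] by auto
qed

end
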